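(* If $G$ is a graph of order $n$ containing no complete subgraph $K_4$, then $q_n(G)\le 4n/9$, where $q_n(G)$ is the smallest eigenvalue of the signless Laplacian of $G$.
   Context: Graphs are finite and simple. For a graph $G$ with adjacency matrix $A$ and diagonal degree matrix $D$, the signless Laplacian is $Q(G)=D+A$; $q_n(G)$ is its smallest eigenvalue. *)

theory Defs
  imports "HOL-Analysis.Analysis"
begin

text \<open>A finite simple graph on the vertex type 'n (order n = CARD('n)),
  given by a symmetric irreflexive adjacency relation.\<close>
definition simple_graph :: "('n::finite \<Rightarrow> 'n \<Rightarrow> bool) \<Rightarrow> bool" where
  "simple_graph E \<longleftrightarrow> (\<forall>u v. E u v \<longleftrightarrow> E v u) \<and> (\<forall>v. \<not> E v v)"

definition adj_matrix :: "('n::finite \<Rightarrow> 'n \<Rightarrow> bool) \<Rightarrow> real^'n^'n" where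
  "adj_matrix E = (\<chi> i j. if E i j then 1 else 0)"

definition degree :: "('n::finite \<Rightarrow> 'n \<Rightarrow> bool) \<Rightarrow> 'n \<Rightarrow> nat" where
  "degree E v = card {u. E v u}"

definition degree_matrix :: "('n::finite \<Rightarrow> 'n \<Rightarrow> bool) \<Rightarrow> real^'n^'n" where
  "degree_matrix E = (\<chi> i j. if i = j then real (degree E i) else 0)"

definition signless_laplacian :: "('n::finite \<Rightarrow> 'n \<Rightarrow> bool) \<Rightarrow> real^'n^'n" where
  "signless_laplacian E = degree_matrix E + adj_matrix E"

definition is_eigenvalue :: "real^'n^'n \<Rightarrow> real \<Rightarrow> bool" where
  "is_eigenvalue M l \<longleftrightarrow> (\<exists>x. x \<noteq> 0 \<and> M *v x = l *\<^sub>R x)"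

text \<open>q_n(G): the smallest eigenvalue of Q(G) (real symmetric, so all eigenvalues are real).\<close>
definition q_min :: "('n::finite \<Rightarrow> 'n \<Rightarrow> bool) \<Rightarrow> real" where
  "q_min E = Min {l. is_eigenvalue (signless_laplacian E) l}"

definition K4_free :: "('n \<Rightarrow> 'n \<Rightarrow> bool) \<Rightarrow> bool" where
  "K4_free E \<longleftrightarrow> \<not> (\<exists>a b c d. distinct [a, b, c, d] \<and>
      E a b \<and> E a c \<and> E a d \<and> E b c \<and> E b d \<and> E c d)"

end

theory Submission
  imports Defs
begin

text \<open>Let m be the number of edges. For an edge wy, the Rayleigh quotient of Q at two test vectors
  built from the neighbourhoods N(w) and N(y) bounds n q_n by the total degree, the edges outside
  N(w) and the edges inside N(w) missing N(y). Averaging over the neighbours y of w, K4-freeness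
  makes the last count an inclusion-exclusion in the codegrees, and Cauchy-Schwarz on the codegrees
  yields n q_n \<le> 4m - 3 S(w) + 3/4 d(w)^2, where S(w) is the sum of the degrees of the neighbours
  of w. Summing over w turns the S(w) into the sum of squared degrees, which is at least 4m^2/n,
  and the resulting quadratic in m gives n^3 q_n \<le> 4n^4/9. An isolated vertex gives q_n \<le> 0.\<close>

lemma inner_matrix_vector_symmetric:
  fixes M :: "real^'n^'n"
  assumes "transpose M = M"
  shows "x \<bullet> (M *v y) = (M *v x) \<bullet> y"
  by (metis assms dot_lmul_matrix transpose_matrix_vector)

lemma Rayleigh_minimizer_eigenvector:
  fixes M :: "real^'n^'n"
  assumes sym: "transpose M = M"
    and lower: "\<And>y. l * (y \<bullet> y) \<le> y \<bullet> (M *v y)"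
    and attained: "x \<bullet> (M *v x) = l * (x \<bullet> x)"
  shows "M *v x = l *\<^sub>R x"
proof -
  define h where "h y = y \<bullet> (M *v y) - l * (y \<bullet> y)" for y
  define z where "z = M *v x - l *\<^sub>R x"
  define a where "a = z \<bullet> z"
  define c where "c = h z"
  have h_nonneg: "0 \<le> h y" for y
    using lower[of y] by (simp add: h_def)
  \<comment> \<open>h \<ge> 0 vanishes at x, so its linear term 2 t a along the direction z must vanish.\<close>
  have h_line: "h (x + t *\<^sub>R z) = 2 * t * a + t\<^sup>2 * c" for t
  proof -
    have "x \<bullet> (M *v z) = (M *v x) \<bullet> z"
      by (rule inner_matrix_vector_symmetric[OF sym])
    then have "h (x + t *\<^sub>R z) = h x + 2 * t * (z \<bullet> z) + t\<^sup>2 * h z"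
      by (simp add: h_def z_def inner_commute power2_eq_square algebra_simps)
    then show ?thesis
      using attained by (simp add: h_def a_def c_def)
  qed
  have "a = 0"
  proof (rule ccontr)
    assume "a \<noteq> 0"
    then have "a > 0" by (simp add: a_def)
    have "c \<ge> 0" using h_nonneg by (simp add: c_def)
    define t where "t = - a / (c + 1)"
    have t_scaled: "t * (c + 1) = - a"
      using \<open>c \<ge> 0\<close> by (simp add: t_def)
    have "0 \<le> (2 * t * a + t\<^sup>2 * c) * (c + 1)\<^sup>2"
      using h_nonneg[of "x + t *\<^sub>R z"] h_line[of t] by simp
    also have "\<dots> = 2 * a * (t * (c + 1)) * (c + 1) + c * (t * (c + 1))\<^sup>2"
      by (simp add: power2_eq_square algebra_simps)
    also have "\<dots> = - (a\<^sup>2 * (c + 2))"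
      unfolding t_scaled by (simp add: power2_eq_square algebra_simps)
    also have "\<dots> < 0"
      using \<open>a > 0\<close> \<open>c \<ge> 0\<close> by simp
    finally show False by simp
  qed
  then show ?thesis by (simp add: a_def z_def)
qed

lemma eigenvectors_orthogonal_symmetric:
  fixes M :: "real^'n^'n"
  assumes "transpose M = M" "M *v x = l *\<^sub>R x" "M *v y = m *\<^sub>R y" "l \<noteq> m"
  shows "x \<bullet> y = 0"
proof -
  have "m * (x \<bullet> y) = x \<bullet> (M *v y)"
    using assms(3) by simp
  also have "\<dots> = (M *v x) \<bullet> y"
    by (rule inner_matrix_vector_symmetric[OF assms(1)])
  also have "\<dots> = l * (x \<bullet> y)"
    using assms(2) by simp
  finally show ?thesis
    using assms(4) by simp
qed

lemma finite_eigenvalues_symmetric: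
  fixes M :: "real^'n^'n"
  assumes sym: "transpose M = M"
  shows "finite {l. is_eigenvalue M l}"
proof -
  let ?S = "{l. is_eigenvalue M l}"
  define v where "v l = (SOME x. x \<noteq> 0 \<and> M *v x = l *\<^sub>R x)" for l
  have v: "v l \<noteq> 0 \<and> M *v v l = l *\<^sub>R v l" if "l \<in> ?S" for l
    using that someI_ex[of "\<lambda>x. x \<noteq> 0 \<and> M *v x = l *\<^sub>R x"]
    unfolding v_def is_eigenvalue_def by blast
  have inj: "inj_on v ?S"
  proof (rule inj_onI)
    fix l m assume "l \<in> ?S" "m \<in> ?S" "v l = v m"
    then have "l *\<^sub>R v l = m *\<^sub>R v l" using v by metis
    then show "l = m" using v \<open>l \<in> ?S\<close> by simp
  qed
  have "pairwise orthogonal (v ` ?S)"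
    unfolding pairwise_image
  proof (intro pairwiseI impI)
    fix l m assume "l \<in> ?S" "m \<in> ?S" "v l \<noteq> v m"
    then show "orthogonal (v l) (v m)"
      using v eigenvectors_orthogonal_symmetric[OF sym] unfolding orthogonal_def by metis
  qed
  moreover have "0 \<notin> v ` ?S" using v by auto
  ultimately have "independent (v ` ?S)"
    by (rule pairwise_orthogonal_independent)
  then show ?thesis
    using inj finite_imageD independent_bound by blast
qed

lemma symmetric_eigenvalue_below_Rayleigh:
  fixes M :: "real^'n^'n"
  assumes sym: "transpose M = M"
  shows "\<exists>l. is_eigenvalue M l \<and> (\<forall>x. l * (x \<bullet> x) \<le> x \<bullet> (M *v x))"
proof -
  let ?g = "\<lambda>x. x \<bullet> (M *v x)"
  have "continuous_on (sphere 0 1) ?g"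
    by (intro continuous_intros)
  then obtain x where x: "x \<in> sphere 0 1" and min: "\<And>y. y \<in> sphere 0 1 \<Longrightarrow> ?g x \<le> ?g y"
    using continuous_attains_inf[of "sphere (0::real^'n) 1" ?g] by auto
  define l where "l = ?g x"
  have lower: "l * (y \<bullet> y) \<le> ?g y" for y
  proof (cases "y = 0")
    case False
    have "(1 / norm y) *\<^sub>R y \<in> sphere 0 1"
      using False by simp
    then have "l \<le> ?g ((1 / norm y) *\<^sub>R y)"
      unfolding l_def by (rule min)
    also have "\<dots> = ?g y / (norm y)\<^sup>2"
      by (simp add: matrix_vector_mult_scaleR power2_eq_square)
    finally have "l * (norm y)\<^sup>2 \<le> ?g y"
      using False by (simp add: pos_le_divide_eq)
    then show ?thesis
      by (simp add: dot_square_norm)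
  qed simp
  have "x \<bullet> x = 1" using x by (simp add: dot_square_norm)
  then have "M *v x = l *\<^sub>R x"
    using Rayleigh_minimizer_eigenvector[OF sym lower] by (simp add: l_def)
  moreover have "x \<noteq> 0" using x by auto
  ultimately show ?thesis
    using lower unfolding is_eigenvalue_def by blast
qed

lemma Min_eigenvalue_le_Rayleigh:
  fixes M :: "real^'n^'n"
  assumes sym: "transpose M = M"
  shows "Min {l. is_eigenvalue M l} * (x \<bullet> x) \<le> x \<bullet> (M *v x)"
proof -
  obtain l where l: "is_eigenvalue M l" and lower: "\<And>x. l * (x \<bullet> x) \<le> x \<bullet> (M *v x)"
    using symmetric_eigenvalue_below_Rayleigh[OF sym] by metis
  have "l \<le> m" if "is_eigenvalue M m" for m
  proof -
    from that obtain y where y: "y \<noteq> 0" "M *v y = m *\<^sub>R y"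
      unfolding is_eigenvalue_def by auto
    have "l * (y \<bullet> y) \<le> m * (y \<bullet> y)"
      using lower[of y] y(2) by simp
    then show ?thesis
      using y(1) by simp
  qed
  then have "Min {l. is_eigenvalue M l} = l"
    using l finite_eigenvalues_symmetric[OF sym] by (intro Min_eqI) auto
  then show ?thesis using lower by simp
qed

definition adj :: "('n \<Rightarrow> 'n \<Rightarrow> bool) \<Rightarrow> 'n \<Rightarrow> 'n \<Rightarrow> real" where
  "adj E u v = (if E u v then 1 else 0)"

lemma real_degree_eq_row_sum: "real (degree E u) = (\<Sum>v\<in>UNIV. adj E u v)"
  by (simp add: degree_def adj_def sum.If_cases)

lemma signless_laplacian_entry:
  "signless_laplacian E $ u $ v = (if u = v then real (degree E u) else 0) + adj E u v"
  by (simp add: signless_laplacian_def degree_matrix_def adj_matrix_def adj_def)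

context
  fixes E :: "'n::finite \<Rightarrow> 'n \<Rightarrow> bool"
  assumes sg: "simple_graph E"
begin

lemma adj_sym: "adj E u v = adj E v u"
  using sg by (simp add: adj_def simple_graph_def)

lemma real_degree_eq_column_sum: "real (degree E v) = (\<Sum>u\<in>UNIV. adj E u v)"
  by (simp add: real_degree_eq_row_sum adj_sym)

lemma signless_laplacian_symmetric: "transpose (signless_laplacian E) = signless_laplacian E"
  by (simp add: vec_eq_iff transpose_def signless_laplacian_def degree_matrix_def adj_matrix_def)
     (metis sg simple_graph_def)

lemma signless_laplacian_quadratic_form:
  "2 * (x \<bullet> (signless_laplacian E *v x)) = (\<Sum>u\<in>UNIV. \<Sum>v\<in>UNIV. adj E u v * (x$u + x$v)\<^sup>2)"
proof -
  have row: "(signless_laplacian E *v x) $ u = (\<Sum>v\<in>UNIV. adj E u v * (x$u + x$v))" for u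
  proof -
    have "(signless_laplacian E *v x) $ u
        = (\<Sum>v\<in>UNIV. (if u = v then real (degree E u) * x$v else 0) + adj E u v * x$v)"
      unfolding matrix_vector_mult_def vec_lambda_beta
      by (rule sum.cong) (auto simp: signless_laplacian_entry algebra_simps)
    also have "\<dots> = real (degree E u) * x$u + (\<Sum>v\<in>UNIV. adj E u v * x$v)"
      by (simp add: sum.distrib)
    also have "\<dots> = (\<Sum>v\<in>UNIV. adj E u v * (x$u + x$v))"
      by (simp add: real_degree_eq_row_sum sum_distrib_left sum.distrib distrib_left mult.commute)
    finally show ?thesis .
  qed
  have swap: "(\<Sum>u\<in>UNIV. \<Sum>v\<in>UNIV. adj E u v * (x$v * (x$u + x$v)))
      = (\<Sum>u\<in>UNIV. \<Sum>v\<in>UNIV. adj E u v * (x$u * (x$u + x$v)))"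
    by (subst sum.swap) (simp add: adj_sym add.commute)
  have split: "adj E u v * (x$u + x$v)\<^sup>2
      = adj E u v * (x$u * (x$u + x$v)) + adj E u v * (x$v * (x$u + x$v))" for u v
    by (simp add: power2_eq_square algebra_simps)
  have "(\<Sum>u\<in>UNIV. \<Sum>v\<in>UNIV. adj E u v * (x$u + x$v)\<^sup>2)
      = (\<Sum>u\<in>UNIV. \<Sum>v\<in>UNIV. adj E u v * (x$u * (x$u + x$v)))
        + (\<Sum>u\<in>UNIV. \<Sum>v\<in>UNIV. adj E u v * (x$v * (x$u + x$v)))"
    by (simp only: split sum.distrib)
  also have "\<dots> = 2 * (x \<bullet> (signless_laplacian E *v x))"
    unfolding swap by (simp add: inner_vec_def row sum_distrib_left algebra_simps)
  finally show ?thesis ..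
qed

lemma q_min_Rayleigh:
  "2 * q_min E * (x \<bullet> x) \<le> (\<Sum>u\<in>UNIV. \<Sum>v\<in>UNIV. adj E u v * (x$u + x$v)\<^sup>2)"
  using Min_eigenvalue_le_Rayleigh[OF signless_laplacian_symmetric, of x]
    signless_laplacian_quadratic_form[of x]
  by (simp add: q_min_def)

lemma q_min_nonpos_if_isolated:
  assumes "\<And>v. \<not> E w v"
  shows "q_min E \<le> 0"
proof -
  have vanish: "adj E u v * (axis w 1 $ u + axis w 1 $ v)\<^sup>2 = 0" for u v
    using assms adj_sym[of u v] by (auto simp: adj_def axis_def)
  have "(\<Sum>u\<in>UNIV. \<Sum>v\<in>UNIV. adj E u v * (axis w 1 $ u + axis w 1 $ v)\<^sup>2) = 0"
    by (simp only: vanish sum.neutral_const)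
  then show ?thesis
    using q_min_Rayleigh[of "axis w 1"] by simp
qed

end

text \<open>The following edge counts range over ordered pairs, so every edge is counted twice.\<close>

definition total_degree :: "('n::finite \<Rightarrow> 'n \<Rightarrow> bool) \<Rightarrow> real" where
  "total_degree E = (\<Sum>u\<in>UNIV. real (degree E u))"

definition neighbour_degree_sum :: "('n::finite \<Rightarrow> 'n \<Rightarrow> bool) \<Rightarrow> 'n \<Rightarrow> real" where
  "neighbour_degree_sum E w = (\<Sum>u\<in>UNIV. adj E w u * real (degree E u))"

definition common_neighbours :: "('n::finite \<Rightarrow> 'n \<Rightarrow> bool) \<Rightarrow> 'n \<Rightarrow> 'n \<Rightarrow> real" where
  "common_neighbours E w u = (\<Sum>y\<in>UNIV. adj E w y * adj E y u)"

definition nbhd_edges :: "('n::finite \<Rightarrow> 'n \<Rightarrow> bool) \<Rightarrow> 'n \<Rightarrow> real" where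
  "nbhd_edges E w = (\<Sum>u\<in>UNIV. adj E w u * common_neighbours E w u)"

definition nbhd_codegree_sq_sum :: "('n::finite \<Rightarrow> 'n \<Rightarrow> bool) \<Rightarrow> 'n \<Rightarrow> real" where
  "nbhd_codegree_sq_sum E w = (\<Sum>u\<in>UNIV. adj E w u * (common_neighbours E w u)\<^sup>2)"

definition edges_outside_nbhd :: "('n::finite \<Rightarrow> 'n \<Rightarrow> bool) \<Rightarrow> 'n \<Rightarrow> real" where
  "edges_outside_nbhd E w =
     (\<Sum>u\<in>UNIV. \<Sum>v\<in>UNIV. adj E u v * (1 - adj E w u) * (1 - adj E w v))"

definition nbhd_edges_avoiding :: "('n::finite \<Rightarrow> 'n \<Rightarrow> bool) \<Rightarrow> 'n \<Rightarrow> 'n \<Rightarrow> real" where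
  "nbhd_edges_avoiding E w y =
     (\<Sum>u\<in>UNIV. \<Sum>v\<in>UNIV. adj E u v * adj E w u * adj E w v * (1 - adj E y u) * (1 - adj E y v))"

lemma nbhd_edges_sq_le: "(nbhd_edges E w)\<^sup>2 \<le> real (degree E w) * nbhd_codegree_sq_sum E w"
proof -
  have "(\<Sum>u\<in>UNIV. adj E w u * (adj E w u * common_neighbours E w u))\<^sup>2
      \<le> (\<Sum>u\<in>UNIV. (adj E w u)\<^sup>2) * (\<Sum>u\<in>UNIV. (adj E w u * common_neighbours E w u)\<^sup>2)"
    by (rule Cauchy_Schwarz_ineq_sum)
  moreover have "(\<Sum>u\<in>UNIV. adj E w u * (adj E w u * common_neighbours E w u)) = nbhd_edges E w"
    unfolding nbhd_edges_def by (intro sum.cong refl) (simp add: adj_def)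
  moreover have "(\<Sum>u\<in>UNIV. (adj E w u)\<^sup>2) = real (degree E w)"
    unfolding real_degree_eq_row_sum by (intro sum.cong refl) (simp add: adj_def)
  moreover have "(\<Sum>u\<in>UNIV. (adj E w u * common_neighbours E w u)\<^sup>2) = nbhd_codegree_sq_sum E w"
    unfolding nbhd_codegree_sq_sum_def by (intro sum.cong refl) (simp add: adj_def power2_eq_square)
  ultimately show ?thesis
    by simp
qed

lemma total_degree_sq_le: "(total_degree E)\<^sup>2 \<le> real CARD('n) * (\<Sum>u\<in>UNIV. (real (degree E u))\<^sup>2)"
  for E :: "'n::finite \<Rightarrow> 'n \<Rightarrow> bool"
  using Cauchy_Schwarz_ineq_sum[of "\<lambda>_. 1" "\<lambda>u. real (degree E u)" UNIV]
  by (simp add: total_degree_def)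

context
  fixes E :: "'n::finite \<Rightarrow> 'n \<Rightarrow> bool"
  assumes sg: "simple_graph E"
begin

lemma common_neighbours_eq_sum: "(\<Sum>v\<in>UNIV. adj E u v * adj E w v) = common_neighbours E w u"
  unfolding common_neighbours_def by (rule sum.cong) (auto simp: adj_sym[OF sg, of u] mult.commute)

lemma sum_nbhd_edges_fst:
  "(\<Sum>u\<in>UNIV. \<Sum>v\<in>UNIV. adj E u v * adj E w u * adj E w v * g u)
     = (\<Sum>u\<in>UNIV. adj E w u * common_neighbours E w u * g u)"
proof (rule sum.cong)
  fix u
  have "(\<Sum>v\<in>UNIV. adj E u v * adj E w u * adj E w v * g u)
      = adj E w u * g u * (\<Sum>v\<in>UNIV. adj E u v * adj E w v)"
    by (simp add: sum_distrib_left mult_ac)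
  then show "(\<Sum>v\<in>UNIV. adj E u v * adj E w u * adj E w v * g u)
      = adj E w u * common_neighbours E w u * g u"
    by (simp add: common_neighbours_eq_sum mult_ac)
qed simp

lemma sum_nbhd_edges_snd:
  "(\<Sum>u\<in>UNIV. \<Sum>v\<in>UNIV. adj E u v * adj E w u * adj E w v * g v)
     = (\<Sum>u\<in>UNIV. adj E w u * common_neighbours E w u * g u)"
proof -
  have "(\<Sum>u\<in>UNIV. \<Sum>v\<in>UNIV. adj E u v * adj E w u * adj E w v * g v)
      = (\<Sum>v\<in>UNIV. \<Sum>u\<in>UNIV. adj E v u * adj E w v * adj E w u * g v)"
    by (subst sum.swap) (simp only: adj_sym[OF sg, of _ "_::'n"] mult_ac)
  also have "\<dots> = (\<Sum>u\<in>UNIV. adj E w u * common_neighbours E w u * g u)"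
    by (rule sum_nbhd_edges_fst)
  finally show ?thesis .
qed

lemma edges_outside_nbhd_eq:
  "edges_outside_nbhd E w = total_degree E - 2 * neighbour_degree_sum E w + nbhd_edges E w"
proof -
  have "edges_outside_nbhd E w
      = (\<Sum>u\<in>UNIV. \<Sum>v\<in>UNIV. adj E u v) - (\<Sum>u\<in>UNIV. \<Sum>v\<in>UNIV. adj E u v * adj E w u)
        - (\<Sum>u\<in>UNIV. \<Sum>v\<in>UNIV. adj E u v * adj E w v)
        + (\<Sum>u\<in>UNIV. \<Sum>v\<in>UNIV. adj E u v * adj E w u * adj E w v)"
    unfolding edges_outside_nbhd_def
    by (simp add: algebra_simps sum.distrib sum_subtractf)
  moreover have "(\<Sum>u\<in>UNIV. \<Sum>v\<in>UNIV. adj E u v * adj E w u) = neighbour_degree_sum E w"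
    by (simp add: neighbour_degree_sum_def real_degree_eq_row_sum sum_distrib_left mult.commute)
  moreover have "(\<Sum>u\<in>UNIV. \<Sum>v\<in>UNIV. adj E u v * adj E w v) = neighbour_degree_sum E w"
    by (subst sum.swap)
       (simp add: neighbour_degree_sum_def real_degree_eq_column_sum[OF sg] sum_distrib_left mult.commute)
  moreover have "(\<Sum>u\<in>UNIV. \<Sum>v\<in>UNIV. adj E u v * adj E w u * adj E w v) = nbhd_edges E w"
    using sum_nbhd_edges_fst[of w "\<lambda>_. 1"] by (simp add: nbhd_edges_def)
  ultimately show ?thesis
    by (simp add: total_degree_def real_degree_eq_row_sum)
qed

lemma sum_neighbour_degree_sum:
  "(\<Sum>w\<in>UNIV. neighbour_degree_sum E w) = (\<Sum>u\<in>UNIV. (real (degree E u))\<^sup>2)"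
  unfolding neighbour_degree_sum_def
  by (subst sum.swap)
     (simp add: sum_distrib_right[symmetric] real_degree_eq_column_sum[OF sg, symmetric] power2_eq_square)

end

context
  fixes E :: "'n::finite \<Rightarrow> 'n \<Rightarrow> bool"
  assumes sg: "simple_graph E" and k4: "K4_free E"
begin

lemma K4_freeD: "E w y \<Longrightarrow> E w u \<Longrightarrow> E w v \<Longrightarrow> E y u \<Longrightarrow> E y v \<Longrightarrow> E u v \<Longrightarrow> False"
  using sg k4 unfolding simple_graph_def K4_free_def by (metis distinct_length_2_or_more distinct_singleton)

text \<open>Test the Rayleigh bound with p = 2 off N(w), p = -1 on N(w), and with r supported on N(w),
  equal to -1 on N(y) and to 1 elsewhere. Then p\<bullet>p + 3 r\<bullet>r = 4n, and an edge uv contributes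
  4 to the combined quadratic form, plus 12 when u, v \<notin> N(w), plus 12 when u, v \<in> N(w) \<setminus> N(y);
  K4-freeness excludes u, v \<in> N(w) \<inter> N(y).\<close>
lemma q_min_edge_bound:
  assumes "E w y"
  shows "real CARD('n) * q_min E
    \<le> total_degree E / 2 + 3/2 * (edges_outside_nbhd E w + nbhd_edges_avoiding E w y)"
proof -
  define p :: "real^'n" where "p = (\<chi> v. if E w v then -1 else 2)"
  define r :: "real^'n" where "r = (\<chi> v. if E w v then (if E y v then -1 else 1) else 0)"
  have "p \<bullet> p + 3 * (r \<bullet> r) = (\<Sum>v\<in>(UNIV::'n set). 4)"
    unfolding inner_vec_def sum_distrib_left sum.distrib[symmetric]
    by (rule sum.cong) (auto simp: p_def r_def)
  then have norms: "p \<bullet> p + 3 * (r \<bullet> r) = 4 * real CARD('n)"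
    by simp
  have edge: "adj E u v * ((p$u + p$v)\<^sup>2 + 3 * (r$u + r$v)\<^sup>2)
      = 4 * adj E u v + 12 * (adj E u v * (1 - adj E w u) * (1 - adj E w v))
        + 12 * (adj E u v * adj E w u * adj E w v * (1 - adj E y u) * (1 - adj E y v))" for u v
    using K4_freeD[OF assms, of u v]
    by (cases "E u v"; cases "E w u"; cases "E w v"; cases "E y u"; cases "E y v")
       (simp_all add: adj_def p_def r_def)
  have "(\<Sum>u\<in>UNIV. \<Sum>v\<in>UNIV. adj E u v * (p$u + p$v)\<^sup>2)
        + 3 * (\<Sum>u\<in>UNIV. \<Sum>v\<in>UNIV. adj E u v * (r$u + r$v)\<^sup>2)
      = (\<Sum>u\<in>UNIV. \<Sum>v\<in>UNIV. adj E u v * ((p$u + p$v)\<^sup>2 + 3 * (r$u + r$v)\<^sup>2))"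
    by (simp add: sum.distrib sum_distrib_left algebra_simps)
  also have "\<dots> = 4 * total_degree E + 12 * edges_outside_nbhd E w + 12 * nbhd_edges_avoiding E w y"
    by (simp only: edge)
       (simp add: total_degree_def real_degree_eq_row_sum edges_outside_nbhd_def nbhd_edges_avoiding_def
         sum.distrib sum_distrib_left)
  finally have "2 * q_min E * (p \<bullet> p + 3 * (r \<bullet> r))
      \<le> 4 * total_degree E + 12 * edges_outside_nbhd E w + 12 * nbhd_edges_avoiding E w y"
    using q_min_Rayleigh[OF sg, of p] q_min_Rayleigh[OF sg, of r] by (simp add: algebra_simps)
  then show ?thesis
    unfolding norms by (simp add: algebra_simps)
qed

text \<open>A vertex y \<in> N(w) avoids an edge uv inside N(w) unless it is a common neighbour of w and u
  or of w and v; it cannot be both, since w, y, u, v would span a K4.\<close>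
lemma sum_nbhd_edges_avoiding:
  "(\<Sum>y\<in>UNIV. adj E w y * nbhd_edges_avoiding E w y)
     = real (degree E w) * nbhd_edges E w - 2 * nbhd_codegree_sq_sum E w"
proof -
  let ?K = "\<lambda>u v. adj E u v * adj E w u * adj E w v"
  have pointwise: "adj E w y * (?K u v * (1 - adj E y u) * (1 - adj E y v))
      = ?K u v * (adj E w y - adj E w y * adj E y u - adj E w y * adj E y v)" for y u v
    using K4_freeD[of w y u v]
    by (cases "E w y"; cases "E y u"; cases "E y v"; cases "E u v"; cases "E w u"; cases "E w v")
       (simp_all add: adj_def)
  have "(\<Sum>y\<in>UNIV. adj E w y * nbhd_edges_avoiding E w y)
      = (\<Sum>u\<in>UNIV. \<Sum>v\<in>UNIV. \<Sum>y\<in>UNIV. adj E w y * (?K u v * (1 - adj E y u) * (1 - adj E y v)))"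
    unfolding nbhd_edges_avoiding_def sum_distrib_left
    by (subst sum.swap, subst (2) sum.swap) (simp add: mult.assoc)
  also have "\<dots> = (\<Sum>u\<in>UNIV. \<Sum>v\<in>UNIV. ?K u v
      * (real (degree E w) - common_neighbours E w u - common_neighbours E w v))"
    by (simp only: pointwise)
       (simp add: sum_distrib_left[symmetric] sum_subtractf real_degree_eq_row_sum common_neighbours_def)
  also have "\<dots> = real (degree E w) * (\<Sum>u\<in>UNIV. \<Sum>v\<in>UNIV. ?K u v * 1)
      - (\<Sum>u\<in>UNIV. \<Sum>v\<in>UNIV. ?K u v * common_neighbours E w u)
      - (\<Sum>u\<in>UNIV. \<Sum>v\<in>UNIV. ?K u v * common_neighbours E w v)"
    by (simp add: algebra_simps sum_subtractf sum_distrib_left sum.distrib)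
  also have "\<dots> = real (degree E w) * nbhd_edges E w - 2 * nbhd_codegree_sq_sum E w"
    using sum_nbhd_edges_fst[OF sg, of w "\<lambda>_. 1"] sum_nbhd_edges_fst[OF sg, of w "common_neighbours E w"]
      sum_nbhd_edges_snd[OF sg, of w "common_neighbours E w"]
    by (simp add: nbhd_edges_def nbhd_codegree_sq_sum_def power2_eq_square mult.assoc)
  finally show ?thesis .
qed

lemma q_min_vertex_bound:
  assumes "0 < degree E w"
  shows "real CARD('n) * q_min E
    \<le> 2 * total_degree E - 3 * neighbour_degree_sum E w + 3/4 * (real (degree E w))\<^sup>2"
proof -
  define d where "d = real (degree E w)"
  define T where "T = nbhd_edges E w"
  define X where "X = nbhd_codegree_sq_sum E w"
  define nq where "nq = real CARD('n) * q_min E"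
  have "d > 0" using assms by (simp add: d_def)
  have triangles: "3 * d * T - 3 * X \<le> 3/4 * d^3"
  proof -
    have "d * (3 * d * T - 3 * X) \<le> 3 * d\<^sup>2 * T - 3 * T\<^sup>2"
      using nbhd_edges_sq_le[of E w] by (simp add: d_def T_def X_def power2_eq_square algebra_simps)
    also have "\<dots> = d * (3/4 * d^3) - 3 * (T - d\<^sup>2 / 2)\<^sup>2"
      by (simp add: power2_eq_square power3_eq_cube algebra_simps)
    also have "\<dots> \<le> d * (3/4 * d^3)"
      by simp
    finally show ?thesis
      using \<open>d > 0\<close> by (simp only: mult_le_cancel_left_pos)
  qed
  have "d * nq = (\<Sum>y\<in>UNIV. adj E w y * nq)"
    by (simp add: d_def real_degree_eq_row_sum sum_distrib_right)
  also have "\<dots> \<le> (\<Sum>y\<in>UNIV. adj E w y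
      * (total_degree E / 2 + 3/2 * (edges_outside_nbhd E w + nbhd_edges_avoiding E w y)))"
    using q_min_edge_bound by (intro sum_mono) (simp add: adj_def nq_def)
  also have "\<dots> = (\<Sum>y\<in>UNIV. adj E w y) * (total_degree E / 2 + 3/2 * edges_outside_nbhd E w)
      + 3/2 * (\<Sum>y\<in>UNIV. adj E w y * nbhd_edges_avoiding E w y)"
    by (simp add: distrib_left sum.distrib sum_distrib_left sum_distrib_right sum_divide_distrib mult_ac)
  also have "\<dots> = d * (total_degree E / 2 + 3/2 * edges_outside_nbhd E w) + 3/2 * (d * T - 2 * X)"
    by (simp add: sum_nbhd_edges_avoiding d_def T_def X_def real_degree_eq_row_sum)
  also have "\<dots> = d * (2 * total_degree E - 3 * neighbour_degree_sum E w) + (3 * d * T - 3 * X)"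
    by (simp add: edges_outside_nbhd_eq[OF sg] T_def field_simps)
  also have "\<dots> \<le> d * (2 * total_degree E - 3 * neighbour_degree_sum E w + 3/4 * d\<^sup>2)"
    using triangles by (simp add: power2_eq_square power3_eq_cube algebra_simps)
  finally show ?thesis
    using \<open>d > 0\<close> by (simp add: nq_def d_def)
qed

lemma q_min_le_if_no_isolated:
  assumes "\<And>w. 0 < degree E w"
  shows "q_min E \<le> 4 * real CARD('n) / 9"
proof -
  define n where "n = real CARD('n)"
  define m where "m = total_degree E"
  define D where "D = (\<Sum>u\<in>UNIV. (real (degree E u))\<^sup>2)"
  have "n > 0" by (simp add: n_def)
  have "n * (n * q_min E) = (\<Sum>w\<in>(UNIV::'n set). n * q_min E)"
    by (simp add: n_def)
  also have "\<dots> \<le> (\<Sum>w\<in>UNIV. 2 * m - 3 * neighbour_degree_sum E w + 3/4 * (real (degree E w))\<^sup>2)"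
    using q_min_vertex_bound[OF assms] by (intro sum_mono) (simp add: n_def m_def)
  also have "\<dots> = n * (2 * m) - 3 * (\<Sum>w\<in>UNIV. neighbour_degree_sum E w) + 3/4 * D"
    by (simp add: n_def D_def sum.distrib sum_subtractf sum_distrib_left)
  also have "\<dots> = n * (2 * m) - 9/4 * D"
    by (simp add: sum_neighbour_degree_sum[OF sg] D_def)
  finally have "n * (n * q_min E) \<le> n * (2 * m) - 9/4 * D" .
  then have "n * (n * (n * q_min E)) \<le> n * (n * (2 * m) - 9/4 * D)"
    using \<open>n > 0\<close> by simp
  also have "\<dots> = n * (n * (2 * m)) - 9/4 * (n * D)"
    by (simp add: algebra_simps)
  also have "\<dots> \<le> n * (n * (2 * m)) - 9/4 * m\<^sup>2"
    using total_degree_sq_le[of E] by (simp add: n_def m_def D_def)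
  also have "\<dots> = n * (n * (n * (4 * n / 9))) - (2/3 * n\<^sup>2 - 3/2 * m)\<^sup>2"
    by (simp add: power2_eq_square algebra_simps)
  also have "\<dots> \<le> n * (n * (n * (4 * n / 9)))"
    by simp
  finally have "n * (n * (n * q_min E)) \<le> n * (n * (n * (4 * n / 9)))" .
  then show ?thesis
    using \<open>n > 0\<close> by (simp add: n_def)
qed

end

theorem mainTheorem8:
  fixes E :: "'n::finite \<Rightarrow> 'n \<Rightarrow> bool"
  assumes "simple_graph E" and "K4_free E"
  shows "q_min E \<le> 4 * real CARD('n) / 9"
proof (cases "\<exists>w. degree E w = 0")
  case True
  then obtain w where "degree E w = 0" by blast
  then have "\<And>v. \<not> E w v"
    by (simp add: degree_def)
  then have "q_min E \<le> 0"
    by (rule q_min_nonpos_if_isolated[OF assms(1)])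
  then show ?thesis by simp
next
  case False
  then show ?thesis
    using q_min_le_if_no_isolated[OF assms] by simp
qed

end
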